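(* For every $t\in(0,1)$, $$\lim_{n \to \infty} \sum_{k \ge 0} B^{n-k}_k(t;1) = 2^{-t}.$$
   Context: For $h\ge 0$, the $h$-Bernstein polynomials are $$B^m_k(t;h) = \binom{m}{k}\frac{\prod_{i=0}^{k-1}(t+ih)\prod_{i=0}^{m-k-1}(1-t+ih)}{\prod_{i=0}^{m-1}(1+ih)}$$ for integers $0\le k\le m$ (empty products equal $1$), and $B^m_k(t;h)=0$ for $m<k$. Here $h=1$. *)

theory Defs
  imports "HOL-Analysis.Analysis"
begin

definition hBernstein :: "nat \<Rightarrow> nat \<Rightarrow> real \<Rightarrow> real \<Rightarrow> real" where
  "hBernstein m k t h =
     (if m < k then 0
      else real (m choose k) *
        (\<Prod>i<k. t + real i * h) * (\<Prod>i<m - k. 1 - t + real i * h) /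
        (\<Prod>i<m. 1 + real i * h))"

end

theory Submission
  imports Defs "HOL-Computational_Algebra.Formal_Power_Series"
begin

text \<open>
  For h = 1 the polynomials factor as B^m_k(t;1) = (t)_k/k! * (1-t)_(m-k)/(m-k)!, so the
  antidiagonal sum over k of B^(n-k)_k(t;1) is the n-th coefficient of
  (1 - x^2)^(-t) * (1 - x)^(t-1) = (1 + x)^(-t) / (1 - x), i.e. the n-th partial sum of
  the binomial series of (1 + x)^(-t) at x = 1. For 0 < t < 1 this series is alternating
  with terms decreasing to 0, and the Leibniz remainder bound holds uniformly for
  0 <= x <= 1; letting x tend to 1 in (1 + x)^(-t) identifies its sum as 2^(-t).
\<close>

definition neg_binomial_coeff :: "real \<Rightarrow> nat \<Rightarrow> real" where
  "neg_binomial_coeff a n = pochhammer a n / fact n"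

lemma neg_binomial_coeff_0 [simp]: "neg_binomial_coeff a 0 = 1"
  by (simp add: neg_binomial_coeff_def)

lemma neg_binomial_coeff_1 [simp]: "neg_binomial_coeff a (Suc 0) = a"
  by (simp add: neg_binomial_coeff_def)

lemma neg_binomial_coeff_Suc:
  "neg_binomial_coeff a (Suc n) * Suc n = neg_binomial_coeff a n * (a + n)"
  by (simp add: neg_binomial_coeff_def pochhammer_Suc field_simps del: of_nat_Suc)

lemma gbinomial_uminus_eq_neg_binomial_coeff:
  "(- a) gchoose n = (-1) ^ n * neg_binomial_coeff a n"
  by (simp add: gbinomial_pochhammer neg_binomial_coeff_def)

lemma hBernstein_one:
  "hBernstein m k t 1
     = (if m < k then 0 else neg_binomial_coeff t k * neg_binomial_coeff (1 - t) (m - k))"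
proof -
  have rising: "(\<Prod>i<n. b + real i) = pochhammer b n" for b n
    by (simp add: pochhammer_prod lessThan_atLeast0)
  show ?thesis
    by (simp add: hBernstein_def rising binomial_fact pochhammer_fact[symmetric]
        neg_binomial_coeff_def)
qed

text \<open>Formal expansions of (1 - x)^(-a) and (1 - x^2)^(-a).\<close>

definition neg_binomial_fps :: "real \<Rightarrow> real fps" where
  "neg_binomial_fps a = Abs_fps (neg_binomial_coeff a)"

definition neg_binomial_fps_square :: "real \<Rightarrow> real fps" where
  "neg_binomial_fps_square a =
     Abs_fps (\<lambda>n. if even n then neg_binomial_coeff a (n div 2) else 0)"

lemma neg_binomial_fps_ODE:
  "(1 - fps_X) * fps_deriv (neg_binomial_fps a) = fps_const a * neg_binomial_fps a"
proof (rule fps_ext)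
  fix n
  show "fps_nth ((1 - fps_X) * fps_deriv (neg_binomial_fps a)) n
      = fps_nth (fps_const a * neg_binomial_fps a) n"
    using neg_binomial_coeff_Suc[of a n]
    by (cases n) (simp_all add: neg_binomial_fps_def algebra_simps)
qed

lemma neg_binomial_fps_square_ODE:
  "(1 - fps_X\<^sup>2) * fps_deriv (neg_binomial_fps_square a)
     = fps_const (2 * a) * fps_X * neg_binomial_fps_square a"
proof (rule fps_ext)
  fix n
  show "fps_nth ((1 - fps_X\<^sup>2) * fps_deriv (neg_binomial_fps_square a)) n
      = fps_nth (fps_const (2 * a) * fps_X * neg_binomial_fps_square a) n"
  proof (cases "even n")
    case True
    then show ?thesis
      by (cases n) (simp_all add: neg_binomial_fps_square_def algebra_simps fps_X_power_mult_nth)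
  next
    case False
    then obtain k where "n = Suc (2 * k)"
      by (metis oddE Suc_eq_plus1)
    then show ?thesis
      using neg_binomial_coeff_Suc[of a k]
      by (simp add: neg_binomial_fps_square_def algebra_simps fps_X_power_mult_nth)
  qed
qed

lemma neg_binomial_fps_square_mult_eq_fps_binomial:
  "neg_binomial_fps_square a * ((1 - fps_X) * neg_binomial_fps (1 - a)) = fps_binomial (- a)"
proof -
  txt \<open>Both sides satisfy (1 + x) F' = -a F and F(0) = 1.\<close>
  define A where "A = neg_binomial_fps_square a"
  define B where "B = neg_binomial_fps (1 - a)"
  define F where "F = A * ((1 - fps_X) * B)"
  define c where "c = fps_const a"
  have const: "fps_const (2 * a) = 2 * c" "fps_const (1 - a) = 1 - c" "fps_const (- a) = - c"
    by (simp_all add: c_def fps_numeral_fps_const)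
  have dA: "(1 - fps_X\<^sup>2) * fps_deriv A = 2 * c * fps_X * A"
    using neg_binomial_fps_square_ODE[of a] unfolding A_def const .
  have dB: "(1 - fps_X) * fps_deriv B = (1 - c) * B"
    using neg_binomial_fps_ODE[of "1 - a"] unfolding B_def const .
  have "(1 + fps_X) * fps_deriv F
      = ((1 - fps_X\<^sup>2) * fps_deriv A) * B + (1 + fps_X) * A * ((1 - fps_X) * fps_deriv B)
        - (1 + fps_X) * A * B"
    by (simp add: F_def algebra_simps power2_eq_square)
  also have "\<dots> = (2 * c * fps_X * A) * B + (1 + fps_X) * A * ((1 - c) * B)
        - (1 + fps_X) * A * B"
    unfolding dA dB ..
  also have "\<dots> = - c * F"
    unfolding F_def by algebra
  finally have "(1 + fps_X) * fps_deriv F = fps_const (- a) * F"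
    unfolding const .
  moreover have "(1 + fps_X :: real fps) \<noteq> 0"
    by (auto dest: arg_cong[of _ _ "\<lambda>f. fps_nth f 0"])
  ultimately have "fps_deriv F = fps_const (- a) * F / (1 + fps_X)"
    by (metis nonzero_mult_div_cancel_left)
  moreover have "fps_nth F 0 = 1"
    by (simp add: F_def A_def B_def neg_binomial_fps_def neg_binomial_fps_square_def)
  ultimately have "F = fps_binomial (- a)"
    using fps_binomial_ODE_unique' by blast
  then show ?thesis
    unfolding F_def A_def B_def .
qed

lemma fps_nth_neg_binomial_fps_square_mult:
  "fps_nth (neg_binomial_fps_square a * neg_binomial_fps (1 - a)) n = (\<Sum>i\<le>n. (- a) gchoose i)"
proof -
  let ?G = "neg_binomial_fps_square a * neg_binomial_fps (1 - a)"
  have "?G = ?G * ((1 - fps_X) * inverse (1 - fps_X))"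
    by (simp add: inverse_mult_eq_1')
  also have "\<dots> = fps_binomial (- a) * inverse (1 - fps_X)"
    by (simp flip: neg_binomial_fps_square_mult_eq_fps_binomial add: mult_ac)
  finally show ?thesis
    by (simp add: fps_inverse_one_minus_fps_X fps_mult_nth atLeast0AtMost)
qed

lemma hBernstein_one_antidiagonal_sum:
  "(\<Sum>k\<le>n. hBernstein (n - k) k t 1)
     = fps_nth (neg_binomial_fps_square t * neg_binomial_fps (1 - t)) n"
proof -
  let ?term = "\<lambda>k. neg_binomial_coeff t k * neg_binomial_coeff (1 - t) (n - 2 * k)"
  have "fps_nth (neg_binomial_fps_square t * neg_binomial_fps (1 - t)) n
      = (\<Sum>i=0..n. if even i then ?term (i div 2) else 0)"
    by (auto simp: fps_mult_nth neg_binomial_fps_square_def neg_binomial_fps_def intro: sum.cong)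
  also have "\<dots> = (\<Sum>i\<in>{i\<in>{0..n}. even i}. ?term (i div 2))"
    by (rule sum.inter_filter[symmetric]) simp
  also have "\<dots> = (\<Sum>k\<in>{k\<in>{..n}. 2 * k \<le> n}. ?term k)"
    by (rule sum.reindex_cong[of "\<lambda>k. 2 * k"]) (auto simp: inj_on_def image_iff elim!: evenE)
  also have "\<dots> = (\<Sum>k\<le>n. if 2 * k \<le> n then ?term k else 0)"
    by (rule sum.inter_filter) simp
  also have "\<dots> = (\<Sum>k\<le>n. hBernstein (n - k) k t 1)"
    by (rule sum.cong) (auto simp: hBernstein_one mult_2)
  finally show ?thesis ..
qed

lemma neg_binomial_coeff_nonneg: "0 \<le> a \<Longrightarrow> 0 \<le> neg_binomial_coeff a n"
  by (simp add: neg_binomial_coeff_def pochhammer_prod prod_nonneg)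

lemma neg_binomial_coeff_Suc_le:
  assumes "0 \<le> a" "a \<le> 1"
  shows "neg_binomial_coeff a (Suc n) \<le> neg_binomial_coeff a n"
proof -
  have "neg_binomial_coeff a (Suc n) * Suc n = neg_binomial_coeff a n * (a + n)"
    by (rule neg_binomial_coeff_Suc)
  also have "\<dots> \<le> neg_binomial_coeff a n * Suc n"
    using assms neg_binomial_coeff_nonneg[of a n] by (intro mult_left_mono) auto
  finally show ?thesis
    by (simp del: of_nat_Suc)
qed

lemma neg_binomial_coeff_le_exp_harm:
  assumes "0 \<le> a"
  shows "neg_binomial_coeff a n \<le> exp ((a - 1) * harm n)"
proof (induction n)
  case 0
  then show ?case
    by (simp add: harm_def)
next
  case (Suc n)
  have "neg_binomial_coeff a (Suc n) = neg_binomial_coeff a n * (1 + (a - 1) / Suc n)"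
    using neg_binomial_coeff_Suc[of a n] by (simp add: field_simps)
  also have "\<dots> \<le> neg_binomial_coeff a n * exp ((a - 1) / Suc n)"
    using neg_binomial_coeff_nonneg[OF assms] by (intro mult_left_mono exp_ge_add_one_self)
  also have "\<dots> \<le> exp ((a - 1) * harm n) * exp ((a - 1) / Suc n)"
    using Suc.IH by (intro mult_right_mono) auto
  also have "\<dots> = exp ((a - 1) * harm (Suc n))"
    by (simp add: harm_Suc exp_add[symmetric] field_simps)
  finally show ?case .
qed

lemma neg_binomial_coeff_tendsto_0:
  assumes "0 \<le> a" "a < 1"
  shows "neg_binomial_coeff a \<longlonglongrightarrow> 0"
proof (rule tendsto_sandwich[of "\<lambda>_. 0" _ _ "\<lambda>n. exp ((a - 1) * harm n)"])
  have "filterlim (\<lambda>n. (1 - a) * harm n) at_top sequentially"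
    using assms by (intro filterlim_tendsto_pos_mult_at_top[OF tendsto_const _ harm_at_top]) auto
  then have "filterlim (\<lambda>n. - ((1 - a) * harm n)) at_bot sequentially"
    by (rule filterlim_uminus_at_top[THEN iffD1])
  then have "filterlim (\<lambda>n. (a - 1) * harm n) at_bot sequentially"
    by (simp add: algebra_simps)
  then show "(\<lambda>n. exp ((a - 1) * harm n)) \<longlonglongrightarrow> 0"
    using exp_at_bot filterlim_compose by blast
qed (use assms neg_binomial_coeff_nonneg neg_binomial_coeff_le_exp_harm in auto)

lemma alternating_series_remainder_bound:
  fixes u :: "nat \<Rightarrow> real"
  assumes "u \<longlonglongrightarrow> 0" "\<And>n. 0 \<le> u n" "\<And>n. u (Suc n) \<le> u n"
  shows "\<bar>(\<Sum>i. (-1) ^ i * u i) - (\<Sum>i<m. (-1) ^ i * u i)\<bar> \<le> u m"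
proof -
  note Leibniz = summable_Leibniz'[OF assms]
  show ?thesis
  proof (cases "even m")
    case True
    then obtain n where m: "m = 2 * n" ..
    have "(\<Sum>i<2 * n + 1. (-1) ^ i * u i) = (\<Sum>i<2 * n. (-1) ^ i * u i) + u (2 * n)"
      by simp
    then show ?thesis
      using Leibniz(2)[of n] Leibniz(4)[of n] m by auto
  next
    case False
    then obtain n where m: "m = 2 * n + 1" ..
    have "(\<Sum>i<2 * Suc n. (-1) ^ i * u i) = (\<Sum>i<2 * n + 1. (-1) ^ i * u i) - u (2 * n + 1)"
      by simp
    then show ?thesis
      using Leibniz(2)[of "Suc n"] Leibniz(4)[of n] m by auto
  qed
qed

lemma binomial_series_remainder_bound:
  assumes "0 \<le> a" "a < 1" "0 \<le> x" "x \<le> 1"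
  shows "summable (\<lambda>i. ((- a) gchoose i) * x ^ i)"
    and "\<bar>(\<Sum>i. ((- a) gchoose i) * x ^ i) - (\<Sum>i<m. ((- a) gchoose i) * x ^ i)\<bar>
           \<le> neg_binomial_coeff a m"
proof -
  define u where "u i = neg_binomial_coeff a i * x ^ i" for i
  have terms: "((- a) gchoose i) * x ^ i = (-1) ^ i * u i" for i
    unfolding u_def gbinomial_uminus_eq_neg_binomial_coeff by (simp only: mult_ac)
  have u_le: "u i \<le> neg_binomial_coeff a i" for i
    using assms neg_binomial_coeff_nonneg[of a i]
    by (simp add: u_def mult_left_le power_le_one)
  have u_nonneg: "0 \<le> u i" for i
    using assms neg_binomial_coeff_nonneg[of a i] by (simp add: u_def)
  have u_decseq: "u (Suc i) \<le> u i" for i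
    using assms neg_binomial_coeff_Suc_le[of a i] neg_binomial_coeff_nonneg[of a]
    unfolding u_def by (intro mult_mono power_decreasing) auto
  have u_tendsto_0: "u \<longlonglongrightarrow> 0"
  proof (rule tendsto_sandwich[of "\<lambda>_. 0" _ _ "neg_binomial_coeff a"])
    show "\<forall>\<^sub>F n in sequentially. 0 \<le> u n"
      and "\<forall>\<^sub>F n in sequentially. u n \<le> neg_binomial_coeff a n"
      using u_nonneg u_le by simp_all
  qed (simp_all add: neg_binomial_coeff_tendsto_0 assms)
  show "summable (\<lambda>i. ((- a) gchoose i) * x ^ i)"
    unfolding terms using summable_Leibniz'(1)[OF u_tendsto_0 u_nonneg u_decseq] .
  show "\<bar>(\<Sum>i. ((- a) gchoose i) * x ^ i) - (\<Sum>i<m. ((- a) gchoose i) * x ^ i)\<bar>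
      \<le> neg_binomial_coeff a m"
    unfolding terms
    using alternating_series_remainder_bound[OF u_tendsto_0 u_nonneg u_decseq, of m] u_le[of m]
    by linarith
qed

lemma binomial_series_at_one:
  fixes a :: real
  assumes "0 \<le> a" "a < 1"
  shows "(\<lambda>i. (- a) gchoose i) sums 2 powr (- a)"
proof -
  txt \<open>Abel's theorem for this series: the remainder bound is uniform in x, so the
    binomial theorem for 0 < x < 1 passes to the limit x = 1.\<close>
  define s where "s = (\<Sum>i. (- a) gchoose i)"
  have "\<bar>s - 2 powr (- a)\<bar> \<le> 2 * neg_binomial_coeff a N" for N
  proof -
    define P where "P x = (\<Sum>i<N. ((- a) gchoose i) * x ^ i)" for x :: real
    have "\<bar>s - (1 + x) powr (- a)\<bar> \<le> 2 * neg_binomial_coeff a N + \<bar>P 1 - P x\<bar>"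
      if "x \<in> {0<..<1}" for x
    proof -
      have "(1 + x) powr (- a) = (\<Sum>i. ((- a) gchoose i) * x ^ i)"
        using gen_binomial_real[of x "- a"] that by (simp add: sums_iff)
      then show ?thesis
        using binomial_series_remainder_bound(2)[OF assms, of x N]
          binomial_series_remainder_bound(2)[OF assms, of 1 N] that
        unfolding s_def P_def by simp
    qed
    then have "\<forall>\<^sub>F x in at_left 1.
        \<bar>s - (1 + x) powr (- a)\<bar> \<le> 2 * neg_binomial_coeff a N + \<bar>P 1 - P x\<bar>"
      using eventually_at_left_real[of 0 1] by (auto elim: eventually_mono)
    moreover have "((\<lambda>x. \<bar>s - (1 + x) powr (- a)\<bar>) \<longlongrightarrow> \<bar>s - (1 + 1) powr (- a)\<bar>) (at_left 1)"
      by (intro tendsto_intros) auto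
    moreover have "((\<lambda>x. 2 * neg_binomial_coeff a N + \<bar>P 1 - P x\<bar>)
        \<longlongrightarrow> 2 * neg_binomial_coeff a N + \<bar>P 1 - P 1\<bar>) (at_left 1)"
      unfolding P_def by (intro tendsto_intros)
    ultimately have "\<bar>s - (1 + 1) powr (- a)\<bar> \<le> 2 * neg_binomial_coeff a N + \<bar>P 1 - P 1\<bar>"
      by (intro tendsto_le[of "at_left 1"]) auto
    then show ?thesis
      by simp
  qed
  moreover have "(\<lambda>N. 2 * neg_binomial_coeff a N) \<longlonglongrightarrow> 0"
    using tendsto_mult_right_zero[OF neg_binomial_coeff_tendsto_0[OF assms]] .
  ultimately have "\<bar>s - 2 powr (- a)\<bar> \<le> 0"
    by (intro LIMSEQ_le_const[of "\<lambda>N. 2 * neg_binomial_coeff a N"]) auto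
  then have "s = 2 powr (- a)"
    by simp
  then show ?thesis
    using binomial_series_remainder_bound(1)[OF assms, of 1] unfolding s_def
    by (simp add: sums_iff)
qed

theorem mainTheorem12:
  fixes t :: real
  assumes "0 < t" and "t < 1"
  shows "(\<lambda>n. \<Sum>k\<le>n. hBernstein (n - k) k t 1) \<longlonglongrightarrow> 2 powr (- t)"
proof -
  have "(\<lambda>n. \<Sum>k\<le>n. hBernstein (n - k) k t 1) = (\<lambda>n. \<Sum>i\<le>n. (- t) gchoose i)"
    by (simp add: hBernstein_one_antidiagonal_sum fps_nth_neg_binomial_fps_square_mult)
  moreover have "(\<lambda>i. (- t) gchoose i) sums 2 powr (- t)"
    using assms by (intro binomial_series_at_one) auto
  ultimately show ?thesis
    by (simp add: sums_def_le)
qed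

end
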